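(* Let $(M,g)$ be a Riemannian manifold of dimension $n\ge 3$ and let $(M,g,\xi,\gamma)$ be a Ricci soliton, i.e. $\frac12\mathcal{L}_\xi g+\mathrm{Ric}=\gamma g$ with $\gamma$ a real constant, whose potential vector field $\xi$ has constant length. If the dual $1$-form $\xi^\flat$ of $\xi$ is a harmonic form, i.e. $\Delta(\xi^\flat)=0$, then the Ricci soliton is steady, i.e. $\gamma=0$.
   Context: $\xi^\flat=g(\xi,\cdot)$. $\Delta$ is the operator on $1$-forms which the paper calls the Laplace–Hodge operator, with convention fixed by the identity $\mathrm{div}(\mathcal{L}_Xg)=(\Delta+\mathrm{Ric}_\sharp)(X^\flat)+d(\mathrm{div}X)$ for every vector field $X$, where $\mathrm{Ric}_\sharp(\theta)(X)=\mathrm{Ric}(\theta^\sharp,X)$ and $(\mathrm{div}T)(X)=\sum_i(\nabla_{E_i}T)(E_i,X)$ for a symmetric $(0,2)$-tensor $T$. A $1$-form $\theta$ is harmonic if $\Delta\theta=0$. *)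

theory Defs
  imports "HOL-Analysis.Analysis"
begin

text \<open>Local coordinate Riemannian geometry on an open set U of the Euclidean
space real^'n (a single chart).  Tensors are given by their components.\<close>

definition pd :: "'n::finite \<Rightarrow> (real^'n \<Rightarrow> real) \<Rightarrow> real^'n \<Rightarrow> real" where
  "pd i f x = deriv (\<lambda>t. f (x + t *\<^sub>R axis i 1)) 0"

fun pds :: "'n::finite list \<Rightarrow> (real^'n \<Rightarrow> real) \<Rightarrow> real^'n \<Rightarrow> real" where
  "pds [] f = f"
| "pds (i # is) f = pd i (pds is f)"

definition smooth_on :: "(real^'n::finite) set \<Rightarrow> (real^'n \<Rightarrow> real) \<Rightarrow> bool" where
  "smooth_on U f \<longleftrightarrow> (\<forall>ds. pds ds f differentiable_on U)"

definition riemannian_metric ::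
  "(real^'n::finite) set \<Rightarrow> (real^'n \<Rightarrow> 'n \<Rightarrow> 'n \<Rightarrow> real) \<Rightarrow> bool" where
  "riemannian_metric U g \<longleftrightarrow> open U \<and>
     (\<forall>i j. smooth_on U (\<lambda>x. g x i j)) \<and>
     (\<forall>x\<in>U. \<forall>i j. g x i j = g x j i) \<and>
     (\<forall>x\<in>U. \<forall>v::real^'n. v \<noteq> 0 \<longrightarrow> (\<Sum>i\<in>UNIV. \<Sum>j\<in>UNIV. v$i * g x i j * v$j) > 0)"

definition ginv :: "(real^'n::finite \<Rightarrow> 'n \<Rightarrow> 'n \<Rightarrow> real) \<Rightarrow> real^'n \<Rightarrow> 'n \<Rightarrow> 'n \<Rightarrow> real" where
  "ginv g x i j = matrix_inv (\<chi> a b. g x a b) $ i $ j"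

definition christoffel :: "(real^'n::finite \<Rightarrow> 'n \<Rightarrow> 'n \<Rightarrow> real) \<Rightarrow> real^'n \<Rightarrow> 'n \<Rightarrow> 'n \<Rightarrow> 'n \<Rightarrow> real" where
  "christoffel g x k i j = 1/2 * (\<Sum>l\<in>UNIV. ginv g x k l *
      (pd i (\<lambda>y. g y j l) x + pd j (\<lambda>y. g y i l) x - pd l (\<lambda>y. g y i j) x))"

definition ricci :: "(real^'n::finite \<Rightarrow> 'n \<Rightarrow> 'n \<Rightarrow> real) \<Rightarrow> real^'n \<Rightarrow> 'n \<Rightarrow> 'n \<Rightarrow> real" where
  "ricci g x i j = (\<Sum>k\<in>UNIV. pd k (\<lambda>y. christoffel g y k i j) x
      - pd j (\<lambda>y. christoffel g y k i k) x
      + (\<Sum>l\<in>UNIV. christoffel g x k k l * christoffel g x l i j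
                   - christoffel g x k j l * christoffel g x l i k))"

definition lie_metric :: "(real^'n::finite \<Rightarrow> 'n \<Rightarrow> 'n \<Rightarrow> real) \<Rightarrow> (real^'n \<Rightarrow> 'n \<Rightarrow> real)
     \<Rightarrow> real^'n \<Rightarrow> 'n \<Rightarrow> 'n \<Rightarrow> real" where
  "lie_metric g \<xi> x i j = (\<Sum>k\<in>UNIV. \<xi> x k * pd k (\<lambda>y. g y i j) x
      + g x k j * pd i (\<lambda>y. \<xi> y k) x + g x i k * pd j (\<lambda>y. \<xi> y k) x)"

definition flat :: "(real^'n::finite \<Rightarrow> 'n \<Rightarrow> 'n \<Rightarrow> real) \<Rightarrow> (real^'n \<Rightarrow> 'n \<Rightarrow> real)
     \<Rightarrow> real^'n \<Rightarrow> 'n \<Rightarrow> real" where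
  "flat g \<xi> x j = (\<Sum>k\<in>UNIV. g x j k * \<xi> x k)"

definition cov1 :: "(real^'n::finite \<Rightarrow> 'n \<Rightarrow> 'n \<Rightarrow> real) \<Rightarrow> (real^'n \<Rightarrow> 'n \<Rightarrow> real)
     \<Rightarrow> real^'n \<Rightarrow> 'n \<Rightarrow> 'n \<Rightarrow> real" where
  "cov1 g \<theta> x i j = pd i (\<lambda>y. \<theta> y j) x - (\<Sum>k\<in>UNIV. christoffel g x k i j * \<theta> x k)"

definition cov2 :: "(real^'n::finite \<Rightarrow> 'n \<Rightarrow> 'n \<Rightarrow> real) \<Rightarrow> (real^'n \<Rightarrow> 'n \<Rightarrow> real)
     \<Rightarrow> real^'n \<Rightarrow> 'n \<Rightarrow> 'n \<Rightarrow> 'n \<Rightarrow> real" where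
  "cov2 g \<theta> x i k j = pd i (\<lambda>y. cov1 g \<theta> y k j) x
      - (\<Sum>l\<in>UNIV. christoffel g x l i k * cov1 g \<theta> x l j
                   + christoffel g x l i j * cov1 g \<theta> x k l)"

text \<open>The Laplace operator on 1-forms with the convention of the paper,
  div(L_X g) = (Delta + Ric)(X^flat) + d(div X), i.e. Delta theta_j = g^{ik} nabla_i nabla_k theta_j.\<close>
definition laplace :: "(real^'n::finite \<Rightarrow> 'n \<Rightarrow> 'n \<Rightarrow> real) \<Rightarrow> (real^'n \<Rightarrow> 'n \<Rightarrow> real)
     \<Rightarrow> real^'n \<Rightarrow> 'n \<Rightarrow> real" where
  "laplace g \<theta> x j = (\<Sum>i\<in>UNIV. \<Sum>k\<in>UNIV. ginv g x i k * cov2 g \<theta> x i k j)"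

definition ricci_soliton :: "(real^'n::finite) set \<Rightarrow> (real^'n \<Rightarrow> 'n \<Rightarrow> 'n \<Rightarrow> real)
     \<Rightarrow> (real^'n \<Rightarrow> 'n \<Rightarrow> real) \<Rightarrow> real \<Rightarrow> bool" where
  "ricci_soliton U g \<xi> \<gamma> \<longleftrightarrow> riemannian_metric U g \<and>
     (\<forall>k. smooth_on U (\<lambda>x. \<xi> x k)) \<and>
     (\<forall>x\<in>U. \<forall>i j. 1/2 * lie_metric g \<xi> x i j + ricci g x i j = \<gamma> * g x i j)"

end

theory Submission
  imports Defs
begin

(* Let theta = xi^flat. Since g(xi, xi) is constant, (nabla_k theta)(xi) = 0; differentiating once
   more and tracing with g^-1 gives the Bochner-type identity |nabla theta|^2 = -(Delta theta)(xi),
   so a harmonic theta, and with it xi, is parallel. A parallel field is Killing, so the soliton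
   equation becomes Ric = gamma g, while the Ricci identity gives Ric(xi, .) = 0. Hence
   gamma g(xi, xi) = 0 and gamma = 0. The argument is pointwise in a single chart and does not
   need n >= 3. *)

definition has_pd :: "'n::finite \<Rightarrow> (real^'n \<Rightarrow> real) \<Rightarrow> real^'n \<Rightarrow> real \<Rightarrow> bool" where
  "has_pd i f x D \<longleftrightarrow> ((\<lambda>t. f (x + t *\<^sub>R axis i 1)) has_real_derivative D) (at 0)"

lemma has_pd_imp_pd: "has_pd i f x D \<Longrightarrow> pd i f x = D"
  unfolding has_pd_def pd_def by (rule DERIV_imp_deriv)

lemma has_pd_add: "has_pd i f x A \<Longrightarrow> has_pd i h x B \<Longrightarrow> has_pd i (\<lambda>y. f y + h y) x (A + B)"
  unfolding has_pd_def by (rule DERIV_add)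

lemma has_pd_minus: "has_pd i f x A \<Longrightarrow> has_pd i (\<lambda>y. - f y) x (- A)"
  unfolding has_pd_def by (rule DERIV_minus)

lemma has_pd_mult:
  "has_pd i f x A \<Longrightarrow> has_pd i h x B \<Longrightarrow> has_pd i (\<lambda>y. f y * h y) x (A * h x + f x * B)"
  unfolding has_pd_def by (drule (1) DERIV_mult) (simp add: mult.commute)

lemma has_pd_const: "has_pd i (\<lambda>y. c) x 0"
  unfolding has_pd_def by simp

lemma has_pd_sum:
  "finite S \<Longrightarrow> (\<And>a. a \<in> S \<Longrightarrow> has_pd i (f a) x (A a)) \<Longrightarrow>
     has_pd i (\<lambda>y. \<Sum>a\<in>S. f a y) x (\<Sum>a\<in>S. A a)"
  by (induct S rule: finite_induct) (simp_all add: has_pd_const has_pd_add)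

lemma has_derivative_imp_has_pd:
  assumes "(f has_derivative f') (at x)"
  shows "has_pd i f x (f' (axis i 1))"
proof -
  have "((\<lambda>t::real. x + t *\<^sub>R axis i 1) has_derivative (\<lambda>t. t *\<^sub>R axis i 1)) (at 0)"
    by (auto intro!: derivative_eq_intros)
  then have "((f \<circ> (\<lambda>t. x + t *\<^sub>R axis i 1)) has_derivative (f' \<circ> (\<lambda>t. t *\<^sub>R axis i 1))) (at 0)"
    by (rule diff_chain_at) (simp add: assms)
  moreover have "f' \<circ> (\<lambda>t. t *\<^sub>R axis i 1) = (*) (f' (axis i 1))"
    using has_derivative_linear[OF assms] by (auto simp: linear_scale mult.commute)
  ultimately show ?thesis
    unfolding has_pd_def has_field_derivative_def by (simp add: comp_def)
qed

lemma differentiable_imp_has_pd: "f differentiable (at x) \<Longrightarrow> has_pd i f x (pd i f x)"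
  unfolding differentiable_def using has_derivative_imp_has_pd has_pd_imp_pd by metis

lemma open_vimage_line:
  fixes U :: "'a::real_normed_vector set"
  assumes "open U"
  shows "open ((\<lambda>t::real. x + t *\<^sub>R a) -` U)"
  by (rule continuous_open_vimage[OF assms]) (intro continuous_intros)

lemma has_pd_transform_open:
  assumes "has_pd i h x D" "open U" "x \<in> U" "\<And>y. y \<in> U \<Longrightarrow> f y = h y"
  shows "has_pd i f x D"
proof -
  let ?S = "(\<lambda>t::real. x + t *\<^sub>R axis i 1) -` U"
  have "open ?S" "0 \<in> ?S" using open_vimage_line[OF assms(2)] assms(3) by simp_all
  moreover have "\<And>t. t \<in> ?S \<Longrightarrow> h (x + t *\<^sub>R axis i 1) = f (x + t *\<^sub>R axis i 1)"
    using assms(4) by simp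
  ultimately show ?thesis
    using has_field_derivative_transform_within_open[OF assms(1)[unfolded has_pd_def]]
    unfolding has_pd_def by metis
qed

lemma pd_cong_open:
  assumes "open U" "x \<in> U" "\<And>y. y \<in> U \<Longrightarrow> f y = h y"
  shows "pd i f x = pd i h x"
proof -
  have "eventually (\<lambda>t. t \<in> (\<lambda>t::real. x + t *\<^sub>R axis i 1) -` U) (nhds 0)"
    using assms(2) by (intro eventually_nhds_in_open open_vimage_line assms(1)) simp
  then have "eventually (\<lambda>t. f (x + t *\<^sub>R axis i 1) = h (x + t *\<^sub>R axis i 1)) (nhds 0)"
    by eventually_elim (simp add: assms(3))
  then show ?thesis unfolding pd_def by (intro deriv_cong_ev) auto
qed

lemma pd_const_on_open:
  assumes "open U" "x \<in> U" "\<And>y. y \<in> U \<Longrightarrow> f y = c"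
  shows "pd i f x = 0"
  using pd_cong_open[OF assms] has_pd_imp_pd[OF has_pd_const] by simp

lemma differentiable_transform_open:
  assumes "f differentiable (at x)" "open U" "x \<in> U" "\<And>y. y \<in> U \<Longrightarrow> f y = h y"
  shows "h differentiable (at x)"
  using assms has_derivative_transform_within_open unfolding differentiable_def by metis

lemma smooth_on_imp_differentiable:
  "smooth_on U f \<Longrightarrow> open U \<Longrightarrow> x \<in> U \<Longrightarrow> f differentiable (at x)"
  unfolding smooth_on_def by (metis differentiable_on_eq_differentiable_at pds.simps(1))

lemma smooth_on_imp_pd_differentiable:
  "smooth_on U f \<Longrightarrow> open U \<Longrightarrow> x \<in> U \<Longrightarrow> pd i f differentiable (at x)"
  unfolding smooth_on_def by (metis differentiable_on_eq_differentiable_at pds.simps)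

lemma second_difference_mean_value:
  fixes f :: "real^'n::finite \<Rightarrow> real"
  assumes "\<And>s t. \<bar>s\<bar> \<le> \<bar>h\<bar> \<Longrightarrow> \<bar>t\<bar> \<le> \<bar>h\<bar> \<Longrightarrow> f differentiable (at (x + s *\<^sub>R axis i 1 + t *\<^sub>R axis k 1))"
  obtains c where "\<bar>c\<bar> \<le> \<bar>h\<bar>"
    and "f (x + h *\<^sub>R axis i 1 + h *\<^sub>R axis k 1) - f (x + h *\<^sub>R axis i 1) - f (x + h *\<^sub>R axis k 1) + f x
         = h * (pd i f (x + c *\<^sub>R axis i 1 + h *\<^sub>R axis k 1) - pd i f (x + c *\<^sub>R axis i 1))"
proof -
  define a :: "real^'n" where "a = axis i 1"
  define b :: "real^'n" where "b = axis k 1"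
  define \<phi> where "\<phi> s = f (x + s *\<^sub>R a + h *\<^sub>R b) - f (x + s *\<^sub>R a)" for s
  define \<phi>' where "\<phi>' s = pd i f (x + s *\<^sub>R a + h *\<^sub>R b) - pd i f (x + s *\<^sub>R a)" for s
  have along_a: "((\<lambda>s. f (x + s *\<^sub>R a + t *\<^sub>R b)) has_real_derivative pd i f (x + s *\<^sub>R a + t *\<^sub>R b)) (at s)"
    if "\<bar>s\<bar> \<le> \<bar>h\<bar>" "\<bar>t\<bar> \<le> \<bar>h\<bar>" for s t
  proof -
    have "((\<lambda>r. f (x + s *\<^sub>R a + t *\<^sub>R b + r *\<^sub>R a)) has_real_derivative pd i f (x + s *\<^sub>R a + t *\<^sub>R b)) (at 0)"
      using differentiable_imp_has_pd[OF assms[OF that]] unfolding has_pd_def a_def b_def .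
    then have "((\<lambda>r. f (x + (r + s) *\<^sub>R a + t *\<^sub>R b)) has_real_derivative pd i f (x + s *\<^sub>R a + t *\<^sub>R b)) (at 0)"
      by (simp add: algebra_simps scaleR_add_left)
    then show ?thesis using DERIV_shift[of "\<lambda>r. f (x + r *\<^sub>R a + t *\<^sub>R b)" _ 0 s] by simp
  qed
  have D\<phi>: "(\<phi> has_real_derivative \<phi>' s) (at s)" if "\<bar>s\<bar> \<le> \<bar>h\<bar>" for s
    unfolding \<phi>_def \<phi>'_def using DERIV_diff[OF along_a[OF that, of h] along_a[OF that, of 0]] by simp
  have "\<exists>c. \<bar>c\<bar> \<le> \<bar>h\<bar> \<and> \<phi> h - \<phi> 0 = h * \<phi>' c"
  proof (cases "h = 0")
    case True
    then show ?thesis by (auto simp: \<phi>_def)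
  next
    case False
    then consider "0 < h" | "h < 0" by linarith
    then show ?thesis
    proof cases
      case 1
      with MVT2[of 0 h \<phi> \<phi>'] D\<phi> obtain c where "0 < c" "c < h" "\<phi> h - \<phi> 0 = (h - 0) * \<phi>' c"
        by force
      then show ?thesis by (intro exI[of _ c]) auto
    next
      case 2
      with MVT2[of h 0 \<phi> \<phi>'] D\<phi> obtain c where "h < c" "c < 0" "\<phi> 0 - \<phi> h = (0 - h) * \<phi>' c"
        by force
      then show ?thesis by (intro exI[of _ c]) (auto simp: algebra_simps)
    qed
  qed
  then show ?thesis using that unfolding \<phi>_def \<phi>'_def a_def b_def by auto
qed

lemma second_difference_quotient_approx:
  fixes f :: "real^'n::finite \<Rightarrow> real"
  assumes "linear L" "h \<noteq> 0" "e \<ge> 0"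
    and diff: "\<And>y. norm (y - x) \<le> 2 * \<bar>h\<bar> \<Longrightarrow> f differentiable (at y)"
    and approx: "\<And>y. norm (y - x) \<le> 2 * \<bar>h\<bar> \<Longrightarrow>
      \<bar>pd i f y - pd i f x - L (y - x)\<bar> \<le> e * norm (y - x)"
  shows "\<bar>(f (x + h *\<^sub>R axis i 1 + h *\<^sub>R axis k 1) - f (x + h *\<^sub>R axis i 1)
           - f (x + h *\<^sub>R axis k 1) + f x) / h\<^sup>2 - L (axis k 1)\<bar> \<le> 3 * e"
proof -
  let ?a = "axis i 1 :: real^'n" and ?b = "axis k 1 :: real^'n"
  have norm_le: "norm (s *\<^sub>R ?a + t *\<^sub>R ?b) \<le> 2 * \<bar>h\<bar>" if "\<bar>s\<bar> \<le> \<bar>h\<bar>" "\<bar>t\<bar> \<le> \<bar>h\<bar>" for s t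
    using norm_triangle_ineq[of "s *\<^sub>R ?a" "t *\<^sub>R ?b"] that by (simp add: norm_axis_1)
  have "f differentiable (at (x + s *\<^sub>R ?a + t *\<^sub>R ?b))" if "\<bar>s\<bar> \<le> \<bar>h\<bar>" "\<bar>t\<bar> \<le> \<bar>h\<bar>" for s t
    using diff[of "x + s *\<^sub>R ?a + t *\<^sub>R ?b"] norm_le[OF that] by (simp add: add.assoc)
  then obtain c where c: "\<bar>c\<bar> \<le> \<bar>h\<bar>" and mv:
    "f (x + h *\<^sub>R ?a + h *\<^sub>R ?b) - f (x + h *\<^sub>R ?a) - f (x + h *\<^sub>R ?b) + f x
     = h * (pd i f (x + c *\<^sub>R ?a + h *\<^sub>R ?b) - pd i f (x + c *\<^sub>R ?a))"
    by (rule second_difference_mean_value)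
  define r1 where "r1 = pd i f (x + c *\<^sub>R ?a + h *\<^sub>R ?b) - pd i f x - L (c *\<^sub>R ?a + h *\<^sub>R ?b)"
  define r2 where "r2 = pd i f (x + c *\<^sub>R ?a) - pd i f x - L (c *\<^sub>R ?a)"
  have "\<bar>r1\<bar> \<le> e * norm (c *\<^sub>R ?a + h *\<^sub>R ?b)"
    unfolding r1_def using approx[of "x + c *\<^sub>R ?a + h *\<^sub>R ?b"] norm_le[OF c order_refl] by (simp add: add.assoc)
  also have "\<dots> \<le> e * (2 * \<bar>h\<bar>)" using norm_le[OF c order_refl] assms(3) by (simp add: mult_left_mono)
  finally have r1: "\<bar>r1\<bar> \<le> 2 * e * \<bar>h\<bar>" by simp
  have "\<bar>r2\<bar> \<le> e * norm (c *\<^sub>R ?a)"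
    unfolding r2_def using approx[of "x + c *\<^sub>R ?a"] norm_le[OF c, of 0] by simp
  also have "\<dots> \<le> e * \<bar>h\<bar>" using c assms(3) by (simp add: norm_axis_1 mult_left_mono)
  finally have r2: "\<bar>r2\<bar> \<le> e * \<bar>h\<bar>" .
  have increment: "pd i f (x + c *\<^sub>R ?a + h *\<^sub>R ?b) - pd i f (x + c *\<^sub>R ?a) = h * L ?b + r1 - r2"
    unfolding r1_def r2_def using linear_add[OF assms(1)] linear_scale[OF assms(1)] by simp
  have "(f (x + h *\<^sub>R ?a + h *\<^sub>R ?b) - f (x + h *\<^sub>R ?a) - f (x + h *\<^sub>R ?b) + f x) / h\<^sup>2 - L ?b
      = (r1 - r2) / h"
    using assms(2) unfolding mv increment by (simp add: field_simps power2_eq_square)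
  moreover have "\<bar>r1 - r2\<bar> \<le> 3 * e * \<bar>h\<bar>" using r1 r2 by arith
  ultimately show ?thesis
    using assms(2) by (simp add: abs_divide divide_le_eq)
qed

lemma second_difference_quotient_tendsto:
  fixes f :: "real^'n::finite \<Rightarrow> real"
  assumes "open U" "x \<in> U" "\<And>y. y \<in> U \<Longrightarrow> f differentiable (at y)"
    and "pd i f differentiable (at x)"
  shows "((\<lambda>h. (f (x + h *\<^sub>R axis i 1 + h *\<^sub>R axis k 1) - f (x + h *\<^sub>R axis i 1)
               - f (x + h *\<^sub>R axis k 1) + f x) / h\<^sup>2) \<longlongrightarrow> pd k (pd i f) x) (at 0)"
proof -
  obtain L where L: "(pd i f has_derivative L) (at x)" using assms(4) unfolding differentiable_def by blast
  have "pd k (pd i f) x = L (axis k 1)"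
    by (rule has_pd_imp_pd[OF has_derivative_imp_has_pd[OF L]])
  moreover obtain d0 where "d0 > 0" "ball x d0 \<subseteq> U" using assms(1,2) open_contains_ball by blast
  ultimately show ?thesis unfolding LIM_eq
  proof (intro allI impI)
    fix r :: real assume "r > 0"
    then have "r / 4 > 0" by simp
    then obtain d where "d > 0" and approx: "\<And>y. norm (y - x) < d \<Longrightarrow>
        norm (pd i f y - pd i f x - L (y - x)) \<le> r / 4 * norm (y - x)"
      using L unfolding has_derivative_at_alt by blast
    show "\<exists>s>0. \<forall>h. h \<noteq> 0 \<and> norm (h - 0) < s \<longrightarrow>
        norm ((f (x + h *\<^sub>R axis i 1 + h *\<^sub>R axis k 1) - f (x + h *\<^sub>R axis i 1)
               - f (x + h *\<^sub>R axis k 1) + f x) / h\<^sup>2 - pd k (pd i f) x) < r"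
    proof (intro exI[of _ "min d0 d / 2"] conjI allI impI)
      show "min d0 d / 2 > 0" using \<open>d > 0\<close> \<open>d0 > 0\<close> by simp
      fix h :: real assume h: "h \<noteq> 0 \<and> norm (h - 0) < min d0 d / 2"
      have "\<bar>(f (x + h *\<^sub>R axis i 1 + h *\<^sub>R axis k 1) - f (x + h *\<^sub>R axis i 1)
               - f (x + h *\<^sub>R axis k 1) + f x) / h\<^sup>2 - L (axis k 1)\<bar> \<le> 3 * (r / 4)"
      proof (rule second_difference_quotient_approx[OF has_derivative_linear[OF L]])
        fix y assume y: "norm (y - x) \<le> 2 * \<bar>h\<bar>"
        then have "y \<in> ball x d0" using h by (simp add: dist_norm norm_minus_commute)
        then show "f differentiable (at y)" using \<open>ball x d0 \<subseteq> U\<close> assms(3) by blast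
        show "\<bar>pd i f y - pd i f x - L (y - x)\<bar> \<le> r / 4 * norm (y - x)"
          using approx[of y] y h by simp
      qed (use h \<open>r > 0\<close> in auto)
      then show "norm ((f (x + h *\<^sub>R axis i 1 + h *\<^sub>R axis k 1) - f (x + h *\<^sub>R axis i 1)
               - f (x + h *\<^sub>R axis k 1) + f x) / h\<^sup>2 - pd k (pd i f) x) < r"
        using \<open>r > 0\<close> \<open>pd k (pd i f) x = L (axis k 1)\<close> by simp
    qed
  qed
qed

lemma pd_pd_commute:
  fixes f :: "real^'n::finite \<Rightarrow> real"
  assumes "open U" "x \<in> U" "\<And>y. y \<in> U \<Longrightarrow> f differentiable (at y)"
    and "pd i f differentiable (at x)" "pd k f differentiable (at x)"
  shows "pd k (pd i f) x = pd i (pd k f) x"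
proof -
  have swap: "(\<lambda>h. (f (x + h *\<^sub>R axis k 1 + h *\<^sub>R axis i 1) - f (x + h *\<^sub>R axis k 1)
               - f (x + h *\<^sub>R axis i 1) + f x) / h\<^sup>2) =
        (\<lambda>h. (f (x + h *\<^sub>R axis i 1 + h *\<^sub>R axis k 1) - f (x + h *\<^sub>R axis i 1)
               - f (x + h *\<^sub>R axis k 1) + f x) / h\<^sup>2)"
    by (simp add: algebra_simps)
  show ?thesis
    using tendsto_unique[OF _ second_difference_quotient_tendsto[OF assms(1-4), of k]
        second_difference_quotient_tendsto[OF assms(1-3,5), of i, unfolded swap]] by simp
qed

lemma pos_def_invertible:
  fixes M :: "real^'n::finite^'n"
  assumes "\<And>v. v \<noteq> 0 \<Longrightarrow> (\<Sum>i\<in>UNIV. \<Sum>j\<in>UNIV. v$i * M$i$j * v$j) > 0"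
  shows "invertible M"
proof -
  have "v = 0" if "M *v v = 0" for v
  proof -
    have "(\<Sum>i\<in>UNIV. \<Sum>j\<in>UNIV. v$i * M$i$j * v$j) = (\<Sum>i\<in>UNIV. v$i * (M *v v)$i)"
      by (simp add: matrix_vector_mult_def sum_distrib_left mult.assoc)
    then show ?thesis using assms that by force
  qed
  then show ?thesis using matrix_left_invertible_ker invertible_left_inverse by blast
qed

lemma
  fixes M :: "real^'n::finite^'n"
  assumes "invertible M"
  shows matrix_inv_right: "M ** matrix_inv M = mat 1"
    and matrix_inv_left: "matrix_inv M ** M = mat 1"
proof -
  have "M ** matrix_inv M = mat 1 \<and> matrix_inv M ** M = mat 1"
    using assms unfolding invertible_def matrix_inv_def by (rule someI_ex)
  then show "M ** matrix_inv M = mat 1" "matrix_inv M ** M = mat 1" by auto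
qed

lemma matrix_inv_cramer:
  fixes M :: "real^'n::finite^'n"
  assumes "invertible M"
  shows "matrix_inv M $ k $ j = det (\<chi> i l. if l = k then axis j 1 $ i else M$i$l) / det M"
proof -
  have "M *v (matrix_inv M *v axis j 1) = axis j 1"
    using matrix_inv_right[OF assms] by (simp add: matrix_vector_mul_assoc)
  then have "matrix_inv M *v axis j 1 = (\<chi> k. det (\<chi> i l. if l = k then axis j 1 $ i else M$i$l) / det M)"
    using cramer[OF invertible_det_nz[THEN iffD1, OF assms]] by blast
  moreover have "(matrix_inv M *v axis j 1) $ k = matrix_inv M $ k $ j"
    by (simp add: matrix_vector_mult_def axis_def if_distrib cong: if_cong)
  ultimately show ?thesis by simp
qed

lemma differentiable_prod:
  fixes f :: "'i \<Rightarrow> 'a::real_normed_vector \<Rightarrow> real"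
  assumes "\<And>i. i \<in> I \<Longrightarrow> f i differentiable (at x)"
  shows "(\<lambda>x. \<Prod>i\<in>I. f i x) differentiable (at x)"
proof -
  obtain f' where "\<And>i. i \<in> I \<Longrightarrow> (f i has_derivative f' i) (at x)"
    using assms unfolding differentiable_def by metis
  then show ?thesis unfolding differentiable_def by (blast intro: has_derivative_prod)
qed

lemma differentiable_det:
  fixes F :: "'a::real_normed_vector \<Rightarrow> 'n::finite \<Rightarrow> 'n \<Rightarrow> real"
  assumes "\<And>i j. (\<lambda>y. F y i j) differentiable (at x)"
  shows "(\<lambda>y. det (\<chi> i j. F y i j)) differentiable (at x)"
  unfolding det_def
  by (intro differentiable_sum differentiable_mult differentiable_const differentiable_prod
      ballI assms) (simp_all add: finite_permutations assms)

lemma quadratic_form_insert: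
  fixes H :: "'i \<Rightarrow> 'i \<Rightarrow> real"
  assumes "finite S" "s \<notin> S" "\<And>i k. H i k = H k i"
  shows "(\<Sum>i\<in>insert s S. \<Sum>k\<in>insert s S. w i * H i k * w k)
    = w s * H s s * w s + 2 * w s * (\<Sum>k\<in>S. H s k * w k) + (\<Sum>i\<in>S. \<Sum>k\<in>S. w i * H i k * w k)"
proof -
  have "(\<Sum>i\<in>S. w i * H i s * w s) = w s * (\<Sum>k\<in>S. H s k * w k)"
    by (simp add: sum_distrib_left assms(3) mult_ac)
  then show ?thesis
    using assms(1,2) by (simp add: sum.distrib sum_distrib_left mult_ac)
qed

lemma schur_complement_pos_def:
  fixes H :: "'i \<Rightarrow> 'i \<Rightarrow> real"
  assumes "finite S" "s \<notin> S" "\<And>i k. H i k = H k i"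
    and pos: "\<And>w. \<exists>i\<in>insert s S. w i \<noteq> 0 \<Longrightarrow> (\<Sum>i\<in>insert s S. \<Sum>k\<in>insert s S. w i * H i k * w k) > 0"
  shows "H s s > 0"
    and "\<exists>i\<in>S. v i \<noteq> 0 \<Longrightarrow> (\<Sum>i\<in>S. \<Sum>k\<in>S. v i * (H i k - H i s * H s k / H s s) * v k) > 0"
proof -
  have Q: "(\<Sum>i\<in>insert s S. \<Sum>k\<in>insert s S. w i * H i k * w k)
    = w s * H s s * w s + 2 * w s * (\<Sum>k\<in>S. H s k * w k) + (\<Sum>i\<in>S. \<Sum>k\<in>S. w i * H i k * w k)" for w
    by (rule quadratic_form_insert[OF assms(1-3)])
  have "(\<Sum>i\<in>insert s S. \<Sum>k\<in>insert s S. of_bool (i = s) * H i k * of_bool (k = s)) = H s s"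
    using assms(1,2) by (simp, auto intro!: sum.neutral)
  then show hss: "H s s > 0"
    using pos[of "\<lambda>i. of_bool (i = s)"] by simp
  assume "\<exists>i\<in>S. v i \<noteq> 0"
  define B where "B = (\<Sum>k\<in>S. H s k * v k)"
  \<comment> \<open>completing the square in the \<open>s\<close>-th coordinate\<close>
  define w where "w = v(s := - B / H s s)"
  have "\<exists>i\<in>insert s S. w i \<noteq> 0"
    using \<open>\<exists>i\<in>S. v i \<noteq> 0\<close> assms(2) unfolding w_def by auto
  note pos[OF this, unfolded Q]
  moreover have "w i = v i" if "i \<in> S" for i
    using that assms(2) unfolding w_def by auto
  then have "(\<Sum>k\<in>S. H s k * w k) = B" "(\<Sum>i\<in>S. \<Sum>k\<in>S. w i * H i k * w k) = (\<Sum>i\<in>S. \<Sum>k\<in>S. v i * H i k * v k)"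
    unfolding B_def by simp_all
  ultimately have "0 < w s * H s s * w s + 2 * w s * B + (\<Sum>i\<in>S. \<Sum>k\<in>S. v i * H i k * v k)"
    by simp
  also have "\<dots> = (\<Sum>i\<in>S. \<Sum>k\<in>S. v i * H i k * v k) - B * B / H s s"
    using hss unfolding w_def by (simp add: field_simps power2_eq_square)
  also have "B * B = (\<Sum>i\<in>S. \<Sum>k\<in>S. v i * H i s * H s k * v k)"
    unfolding B_def sum_product by (simp add: assms(3) mult_ac)
  finally show "(\<Sum>i\<in>S. \<Sum>k\<in>S. v i * (H i k - H i s * H s k / H s s) * v k) > 0"
    by (simp add: algebra_simps sum_subtractf sum_divide_distrib)
qed

lemma pos_def_sum_of_squares:
  fixes H :: "'i \<Rightarrow> 'i \<Rightarrow> real"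
  assumes "finite S" "\<And>i k. H i k = H k i"
    and "\<And>v. \<exists>i\<in>S. v i \<noteq> 0 \<Longrightarrow> (\<Sum>i\<in>S. \<Sum>k\<in>S. v i * H i k * v k) > 0"
  shows "\<exists>w. \<forall>i\<in>S. \<forall>k\<in>S. H i k = (\<Sum>j\<in>S. w j i * w j k)"
  using assms
proof (induct S arbitrary: H rule: finite_induct)
  case empty
  then show ?case by simp
next
  case (insert s S)
  define H' where "H' i k = H i k - H i s * H s k / H s s" for i k
  have hss: "H s s > 0"
    using schur_complement_pos_def[OF insert.hyps(1,2) insert.prems] by blast
  have "\<exists>w'. \<forall>i\<in>S. \<forall>k\<in>S. H' i k = (\<Sum>j\<in>S. w' j i * w' j k)"
    using schur_complement_pos_def(2)[OF insert.hyps(1,2) insert.prems] insert.prems(1)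
    by (intro insert.hyps(3)) (auto simp: H'_def mult.commute)
  then obtain w' where w': "\<And>i k. i \<in> S \<Longrightarrow> k \<in> S \<Longrightarrow> H' i k = (\<Sum>j\<in>S. w' j i * w' j k)"
    by blast
  define w where "w j i = (if j = s then H s i / sqrt (H s s) else if i = s then 0 else w' j i)" for j i
  have "H i k = (\<Sum>j\<in>insert s S. w j i * w j k)" if "i \<in> insert s S" "k \<in> insert s S" for i k
  proof -
    have "(\<Sum>j\<in>insert s S. w j i * w j k) = H s i * H s k / H s s + (\<Sum>j\<in>S. w j i * w j k)"
      using insert.hyps hss by (simp add: w_def)
    moreover have "(\<Sum>j\<in>S. w j i * w j k) = (\<Sum>j\<in>S. if i = s \<or> k = s then 0 else w' j i * w' j k)"
      using insert.hyps(2) unfolding w_def by (intro sum.cong) auto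
    then have "(\<Sum>j\<in>S. w j i * w j k) = (if i = s \<or> k = s then 0 else H' i k)"
      using that by (auto simp: w')
    ultimately show ?thesis
      using hss insert.prems(1) by (auto simp: H'_def)
  qed
  then show ?case by blast
qed

lemma bilinear_sum_of_squares:
  fixes H :: "'n::finite \<Rightarrow> 'n \<Rightarrow> real"
  assumes "\<And>a b. H a b = (\<Sum>j\<in>UNIV. w j a * w j b)"
  shows "(\<Sum>a\<in>UNIV. x a * (\<Sum>b\<in>UNIV. H a b * y b))
    = (\<Sum>j\<in>UNIV. (\<Sum>a\<in>UNIV. x a * w j a) * (\<Sum>b\<in>UNIV. y b * w j b))"
proof -
  have "(\<Sum>a\<in>UNIV. x a * (\<Sum>b\<in>UNIV. H a b * y b))
      = (\<Sum>a\<in>UNIV. \<Sum>b\<in>UNIV. \<Sum>j\<in>UNIV. (x a * w j a) * (y b * w j b))"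
    by (simp add: assms sum_distrib_left sum_distrib_right mult_ac)
  also have "\<dots> = (\<Sum>a\<in>UNIV. \<Sum>j\<in>UNIV. \<Sum>b\<in>UNIV. (x a * w j a) * (y b * w j b))"
    by (intro sum.cong refl sum.swap)
  also have "\<dots> = (\<Sum>j\<in>UNIV. \<Sum>a\<in>UNIV. \<Sum>b\<in>UNIV. (x a * w j a) * (y b * w j b))"
    by (rule sum.swap)
  finally show ?thesis by (simp add: sum_product)
qed

lemma pos_def_trace_eq_0_imp_zero:
  fixes G H A :: "'n::finite \<Rightarrow> 'n \<Rightarrow> real"
  assumes G_pos: "\<And>v. \<exists>i. v i \<noteq> 0 \<Longrightarrow> (\<Sum>i\<in>UNIV. \<Sum>k\<in>UNIV. v i * G i k * v k) > 0"
    and H_sym: "\<And>a b. H a b = H b a"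
    and H_pos: "\<And>v. \<exists>a. v a \<noteq> 0 \<Longrightarrow> (\<Sum>a\<in>UNIV. \<Sum>b\<in>UNIV. v a * H a b * v b) > 0"
    and trace: "(\<Sum>i\<in>UNIV. \<Sum>k\<in>UNIV. G i k * (\<Sum>a\<in>UNIV. A k a * (\<Sum>b\<in>UNIV. H a b * A i b))) = 0"
  shows "A k a = 0"
proof -
  have "\<exists>w. \<forall>a\<in>UNIV. \<forall>b\<in>UNIV. H a b = (\<Sum>j\<in>(UNIV::'n set). w j a * w j b)"
    by (rule pos_def_sum_of_squares) (use H_sym H_pos in auto)
  then obtain w where w: "\<And>a b. H a b = (\<Sum>j\<in>(UNIV::'n set). w j a * w j b)"
    by blast
  \<comment> \<open>with \<open>H = W\<^sup>T W\<close> the trace is a sum of \<open>G\<close>-norms of the rows of \<open>W A\<^sup>T\<close>\<close>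
  define u where "u j k = (\<Sum>a\<in>UNIV. A k a * w j a)" for j k
  define q where "q j = (\<Sum>i\<in>UNIV. \<Sum>k\<in>UNIV. u j i * G i k * u j k)" for j
  have H_rows: "(\<Sum>a\<in>UNIV. A k a * (\<Sum>b\<in>UNIV. H a b * A i b)) = (\<Sum>j\<in>UNIV. u j k * u j i)" for k i
    unfolding bilinear_sum_of_squares[OF w] u_def ..
  have "(\<Sum>i\<in>UNIV. \<Sum>k\<in>UNIV. \<Sum>j\<in>UNIV. u j i * G i k * u j k) = (\<Sum>i\<in>UNIV. \<Sum>j\<in>UNIV. \<Sum>k\<in>UNIV. u j i * G i k * u j k)"
    by (intro sum.cong refl sum.swap)
  also have "\<dots> = (\<Sum>j\<in>UNIV. q j)" unfolding q_def by (rule sum.swap)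
  finally have "(\<Sum>j\<in>UNIV. q j) = 0"
    using trace unfolding H_rows by (simp add: sum_distrib_left mult_ac)
  moreover have "q j \<ge> 0" for j
    using G_pos[of "u j"] unfolding q_def by (cases "\<exists>i. u j i \<noteq> 0") auto
  ultimately have "q j = 0" for j using sum_nonneg_eq_0_iff[of UNIV q] by simp
  then have "u j i = 0" for j i using G_pos[of "u j"] unfolding q_def by force
  then have "(\<Sum>a\<in>UNIV. \<Sum>b\<in>UNIV. A k a * H a b * A k b) = 0"
    using H_rows[of k k] by (simp add: sum_distrib_left mult.assoc)
  then show ?thesis using H_pos[of "A k"] by force
qed

(* riemann g x l k i m is the component R^l_mki, i.e. the l-th component of R(d_k, d_i) d_m. *)
definition riemann :: "(real^'n::finite \<Rightarrow> 'n \<Rightarrow> 'n \<Rightarrow> real) \<Rightarrow> real^'n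
     \<Rightarrow> 'n \<Rightarrow> 'n \<Rightarrow> 'n \<Rightarrow> 'n \<Rightarrow> real" where
  "riemann g x l k i m = pd k (\<lambda>y. christoffel g y l i m) x - pd i (\<lambda>y. christoffel g y l k m) x
      + (\<Sum>p\<in>UNIV. christoffel g x l k p * christoffel g x p i m
                   - christoffel g x l i p * christoffel g x p k m)"

locale riemannian_chart =
  fixes U :: "(real^'n::finite) set" and g :: "real^'n \<Rightarrow> 'n \<Rightarrow> 'n \<Rightarrow> real"
  assumes riemannian: "riemannian_metric U g"
begin

lemma open_U: "open U"
  using riemannian unfolding riemannian_metric_def by simp

lemma metric_sym: "x \<in> U \<Longrightarrow> g x i j = g x j i"
  using riemannian unfolding riemannian_metric_def by simp

lemma metric_differentiable: "x \<in> U \<Longrightarrow> (\<lambda>y. g y i j) differentiable (at x)"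
  using riemannian smooth_on_imp_differentiable open_U unfolding riemannian_metric_def by blast

lemma pd_metric_differentiable: "x \<in> U \<Longrightarrow> pd k (\<lambda>y. g y i j) differentiable (at x)"
  using riemannian smooth_on_imp_pd_differentiable open_U unfolding riemannian_metric_def by blast

lemma pd_metric_sym: "x \<in> U \<Longrightarrow> pd k (\<lambda>y. g y i j) x = pd k (\<lambda>y. g y j i) x"
  by (rule pd_cong_open[OF open_U]) (auto simp: metric_sym)

lemma metric_pos_def:
  assumes "x \<in> U" "\<exists>i. v i \<noteq> 0"
  shows "(\<Sum>i\<in>UNIV. \<Sum>k\<in>UNIV. v i * g x i k * v k) > 0"
proof -
  have "vec_lambda v \<noteq> 0" using assms(2) by (auto simp: vec_eq_iff)
  then show ?thesis using riemannian assms(1) unfolding riemannian_metric_def by fastforce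
qed

lemma invertible_metric: "x \<in> U \<Longrightarrow> invertible (\<chi> a b. g x a b)"
  by (rule pos_def_invertible) (use metric_pos_def[of x "\<lambda>i. _ $ i"] in \<open>auto simp: vec_eq_iff\<close>)

lemma metric_ginv: "x \<in> U \<Longrightarrow> (\<Sum>b\<in>UNIV. g x a b * ginv g x b c) = of_bool (a = c)"
  using matrix_inv_right[OF invertible_metric, of x] unfolding ginv_def
  by (auto simp: matrix_matrix_mult_def mat_def vec_eq_iff)

lemma ginv_metric: "x \<in> U \<Longrightarrow> (\<Sum>b\<in>UNIV. ginv g x a b * g x b c) = of_bool (a = c)"
  using matrix_inv_left[OF invertible_metric, of x] unfolding ginv_def
  by (auto simp: matrix_matrix_mult_def mat_def vec_eq_iff)

lemma ginv_sym:
  assumes "x \<in> U"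
  shows "ginv g x a b = ginv g x b a"
proof -
  let ?M = "\<chi> a b. g x a b"
  let ?N = "matrix_inv ?M"
  have "transpose ?M = ?M"
    using metric_sym[OF assms] by (simp add: transpose_def vec_eq_iff)
  then have "transpose ?N ** ?M = mat 1"
    using arg_cong[OF matrix_inv_right[OF invertible_metric[OF assms]], of transpose]
    by (simp add: matrix_transpose_mul)
  then have "transpose ?N = ?N"
    using matrix_inv_right[OF invertible_metric[OF assms]]
    by (metis matrix_mul_assoc matrix_mul_lid matrix_mul_rid)
  then have "?N $ a $ b = transpose ?N $ a $ b" by simp
  then show ?thesis unfolding ginv_def by (simp add: transpose_def)
qed

lemma ginv_pos_def:
  assumes x: "x \<in> U" and "\<exists>i. v i \<noteq> 0"
  shows "(\<Sum>i\<in>UNIV. \<Sum>k\<in>UNIV. v i * ginv g x i k * v k) > 0"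
proof -
  \<comment> \<open>the quadratic form of \<open>g\<^sup>-\<^sup>1\<close> at \<open>v\<close> is that of \<open>g\<close> at \<open>u = g\<^sup>-\<^sup>1 v\<close>\<close>
  define u where "u a = (\<Sum>b\<in>UNIV. ginv g x a b * v b)" for a
  have v_eq: "v a = (\<Sum>c\<in>UNIV. g x a c * u c)" for a
  proof -
    have "(\<Sum>c\<in>UNIV. g x a c * u c) = (\<Sum>c\<in>UNIV. \<Sum>b\<in>UNIV. g x a c * ginv g x c b * v b)"
      unfolding u_def by (simp add: sum_distrib_left mult.assoc)
    also have "\<dots> = (\<Sum>b\<in>UNIV. \<Sum>c\<in>UNIV. g x a c * ginv g x c b * v b)"
      by (rule sum.swap)
    also have "\<dots> = v a"
      using metric_ginv[OF x] by (simp add: sum_distrib_right[symmetric])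
    finally show ?thesis ..
  qed
  have "\<exists>i. u i \<noteq> 0"
  proof (rule ccontr)
    assume "\<not> (\<exists>i. u i \<noteq> 0)"
    then show False using v_eq assms(2) by simp
  qed
  then have "(\<Sum>i\<in>UNIV. \<Sum>c\<in>UNIV. u i * g x i c * u c) > 0" by (rule metric_pos_def[OF x])
  also have "(\<Sum>i\<in>UNIV. \<Sum>c\<in>UNIV. u i * g x i c * u c) = (\<Sum>i\<in>UNIV. v i * u i)"
    by (simp add: v_eq sum_distrib_left sum_distrib_right mult_ac)
  also have "\<dots> = (\<Sum>i\<in>UNIV. \<Sum>k\<in>UNIV. v i * ginv g x i k * v k)"
    unfolding u_def by (simp add: sum_distrib_left mult.assoc)
  finally show ?thesis .
qed

lemma ginv_differentiable:
  assumes x: "x \<in> U"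
  shows "(\<lambda>y. ginv g y a b) differentiable (at x)"
proof (rule differentiable_transform_open[OF _ open_U x])
  show "(\<lambda>y. det (\<chi> i l. if l = a then axis b 1 $ i else g y i l) / det (\<chi> i l. g y i l))
      differentiable (at x)"
  proof (intro differentiable_divide differentiable_det)
    show "(\<lambda>y. if l = a then axis b 1 $ i else g y i l) differentiable (at x)" for i l
      by (cases "l = a") (simp_all add: metric_differentiable[OF x])
  qed (use invertible_metric[OF x] metric_differentiable[OF x] in \<open>simp_all add: invertible_det_nz\<close>)
  show "det (\<chi> i l. if l = a then axis b 1 $ i else g y i l) / det (\<chi> i l. g y i l) = ginv g y a b"
    if "y \<in> U" for y
    using matrix_inv_cramer[OF invertible_metric[OF that]] unfolding ginv_def by (simp cong: if_cong)
qed

lemma christoffel_sym: "x \<in> U \<Longrightarrow> christoffel g x k i j = christoffel g x k j i"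
  unfolding christoffel_def by (simp add: pd_metric_sym[of x _ i j] add.commute)

lemma pd_christoffel_sym:
  "x \<in> U \<Longrightarrow> pd l (\<lambda>y. christoffel g y k i j) x = pd l (\<lambda>y. christoffel g y k j i) x"
  by (rule pd_cong_open[OF open_U]) (auto simp: christoffel_sym)

lemma christoffel_differentiable: "x \<in> U \<Longrightarrow> (\<lambda>y. christoffel g y k i j) differentiable (at x)"
  unfolding christoffel_def
  by (intro differentiable_mult differentiable_sum differentiable_add differentiable_diff
      differentiable_const ginv_differentiable pd_metric_differentiable ballI finite) auto

lemma christoffel_first_kind:
  assumes x: "x \<in> U"
  shows "(\<Sum>m\<in>UNIV. christoffel g x m k a * g x m b) =
    1/2 * (pd k (\<lambda>y. g y a b) x + pd a (\<lambda>y. g y k b) x - pd b (\<lambda>y. g y k a) x)"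
proof -
  define T where "T l = pd k (\<lambda>y. g y a l) x + pd a (\<lambda>y. g y k l) x - pd l (\<lambda>y. g y k a) x" for l
  have "(\<Sum>m\<in>UNIV. christoffel g x m k a * g x m b)
      = (\<Sum>m\<in>UNIV. \<Sum>l\<in>UNIV. 1/2 * T l * (ginv g x l m * g x m b))"
    unfolding christoffel_def T_def
    by (simp add: sum_distrib_left sum_distrib_right ginv_sym[OF x] mult_ac)
  also have "\<dots> = (\<Sum>l\<in>UNIV. 1/2 * T l * (\<Sum>m\<in>UNIV. ginv g x l m * g x m b))"
    by (subst sum.swap) (simp add: sum_distrib_left)
  also have "\<dots> = 1/2 * (\<Sum>l\<in>UNIV. T l * of_bool (l = b))"
    unfolding ginv_metric[OF x] by (simp add: sum_distrib_left mult_ac)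
  also have "\<dots> = 1/2 * T b"
    by simp
  finally show ?thesis unfolding T_def .
qed

lemma pd_metric_christoffel:
  assumes x: "x \<in> U"
  shows "pd k (\<lambda>y. g y a b) x =
    (\<Sum>m\<in>UNIV. christoffel g x m k a * g x m b + christoffel g x m k b * g x a m)"
proof -
  have "(\<Sum>m\<in>UNIV. christoffel g x m k a * g x m b + christoffel g x m k b * g x a m)
      = (\<Sum>m\<in>UNIV. christoffel g x m k a * g x m b) + (\<Sum>m\<in>UNIV. christoffel g x m k b * g x m a)"
    by (simp add: sum.distrib metric_sym[OF x, of a])
  also have "\<dots> = pd k (\<lambda>y. g y a b) x"
    unfolding christoffel_first_kind[OF x] using pd_metric_sym[OF x, of k b a] by (simp add: field_simps)
  finally show ?thesis ..
qed

lemma ricci_eq_trace_riemann: "x \<in> U \<Longrightarrow> ricci g x i j = (\<Sum>k\<in>UNIV. riemann g x k k j i)"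
  unfolding ricci_def riemann_def
  by (intro sum.cong refl)
    (simp add: christoffel_sym[of x _ j i] christoffel_sym[of x _ _ i] pd_christoffel_sym[of x _ _ j i]
      pd_christoffel_sym[of x _ _ _ i])

end

definition cov_vec :: "(real^'n::finite \<Rightarrow> 'n \<Rightarrow> 'n \<Rightarrow> real) \<Rightarrow> (real^'n \<Rightarrow> 'n \<Rightarrow> real)
     \<Rightarrow> real^'n \<Rightarrow> 'n \<Rightarrow> 'n \<Rightarrow> real" where
  "cov_vec g \<xi> x k a = pd k (\<lambda>y. \<xi> y a) x + (\<Sum>m\<in>UNIV. christoffel g x a k m * \<xi> x m)"

locale chart_vector_field = riemannian_chart U g for U :: "(real^'n::finite) set" and g +
  fixes \<xi> :: "real^'n \<Rightarrow> 'n \<Rightarrow> real"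
  assumes field_smooth: "\<And>k. smooth_on U (\<lambda>x. \<xi> x k)"
begin

abbreviation \<theta> where "\<theta> \<equiv> flat g \<xi>"

lemma field_differentiable: "x \<in> U \<Longrightarrow> (\<lambda>y. \<xi> y a) differentiable (at x)"
  using field_smooth smooth_on_imp_differentiable open_U by blast

lemma pd_field_differentiable: "x \<in> U \<Longrightarrow> pd k (\<lambda>y. \<xi> y a) differentiable (at x)"
  using field_smooth smooth_on_imp_pd_differentiable open_U by blast

lemma flat_differentiable: "x \<in> U \<Longrightarrow> (\<lambda>y. \<theta> y a) differentiable (at x)"
  unfolding flat_def
  by (intro differentiable_sum differentiable_mult metric_differentiable field_differentiable ballI finite)

lemma has_pd_flat:
  "x \<in> U \<Longrightarrow> has_pd k (\<lambda>y. \<theta> y a) x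
     (\<Sum>b\<in>UNIV. pd k (\<lambda>y. g y a b) x * \<xi> x b + g x a b * pd k (\<lambda>y. \<xi> y b) x)"
  unfolding flat_def
  by (intro has_pd_sum has_pd_mult differentiable_imp_has_pd metric_differentiable field_differentiable finite)

lemma cov1_flat_differentiable:
  assumes x: "x \<in> U"
  shows "(\<lambda>y. cov1 g \<theta> y k a) differentiable (at x)"
proof (rule differentiable_transform_open[OF _ open_U x])
  show "(\<lambda>y. (\<Sum>b\<in>UNIV. pd k (\<lambda>y. g y a b) y * \<xi> y b + g y a b * pd k (\<lambda>y. \<xi> y b) y)
      - (\<Sum>l\<in>UNIV. christoffel g y l k a * \<theta> y l)) differentiable (at x)"
    by (intro differentiable_diff differentiable_sum differentiable_mult differentiable_add
        metric_differentiable pd_metric_differentiable field_differentiable pd_field_differentiable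
        christoffel_differentiable flat_differentiable x ballI finite)
  show "(\<Sum>b\<in>UNIV. pd k (\<lambda>y. g y a b) y * \<xi> y b + g y a b * pd k (\<lambda>y. \<xi> y b) y)
      - (\<Sum>l\<in>UNIV. christoffel g y l k a * \<theta> y l) = cov1 g \<theta> y k a" if "y \<in> U" for y
    unfolding cov1_def has_pd_imp_pd[OF has_pd_flat[OF that]] ..
qed

lemma cov1_flat_eq:
  assumes x: "x \<in> U"
  shows "cov1 g \<theta> x k a = (\<Sum>m\<in>UNIV. g x a m * cov_vec g \<xi> x k m)"
proof -
  have "pd k (\<lambda>y. \<theta> y a) x = (\<Sum>b\<in>UNIV. \<Sum>m\<in>UNIV. christoffel g x m k a * g x m b * \<xi> x b)
      + (\<Sum>b\<in>UNIV. \<Sum>m\<in>UNIV. christoffel g x m k b * g x a m * \<xi> x b)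
      + (\<Sum>b\<in>UNIV. g x a b * pd k (\<lambda>y. \<xi> y b) x)"
    unfolding has_pd_imp_pd[OF has_pd_flat[OF x]] pd_metric_christoffel[OF x]
    by (simp add: sum.distrib sum_distrib_right distrib_right)
  also have "(\<Sum>b\<in>UNIV. \<Sum>m\<in>UNIV. christoffel g x m k a * g x m b * \<xi> x b)
      = (\<Sum>l\<in>UNIV. christoffel g x l k a * \<theta> x l)"
    unfolding flat_def by (subst sum.swap) (simp add: sum_distrib_left mult.assoc)
  also have "(\<Sum>b\<in>UNIV. \<Sum>m\<in>UNIV. christoffel g x m k b * g x a m * \<xi> x b)
      = (\<Sum>m\<in>UNIV. g x a m * (\<Sum>b\<in>UNIV. christoffel g x m k b * \<xi> x b))"
    by (subst sum.swap) (simp add: sum_distrib_left mult_ac)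
  finally show ?thesis
    unfolding cov1_def cov_vec_def by (simp add: sum.distrib distrib_left)
qed

lemma cov_vec_eq:
  assumes x: "x \<in> U"
  shows "cov_vec g \<xi> x k a = (\<Sum>b\<in>UNIV. ginv g x a b * cov1 g \<theta> x k b)"
proof -
  have "(\<Sum>b\<in>UNIV. ginv g x a b * cov1 g \<theta> x k b)
      = (\<Sum>b\<in>UNIV. \<Sum>m\<in>UNIV. ginv g x a b * g x b m * cov_vec g \<xi> x k m)"
    unfolding cov1_flat_eq[OF x] by (simp add: sum_distrib_left mult.assoc)
  also have "\<dots> = (\<Sum>m\<in>UNIV. (\<Sum>b\<in>UNIV. ginv g x a b * g x b m) * cov_vec g \<xi> x k m)"
    by (subst sum.swap) (simp add: sum_distrib_right)
  finally show ?thesis by (simp add: ginv_metric[OF x])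
qed

lemma lie_metric_eq_0_if_parallel:
  assumes x: "x \<in> U" and parallel: "\<And>k a. cov_vec g \<xi> x k a = 0"
  shows "lie_metric g \<xi> x i j = 0"
proof -
  have pd_field: "pd k (\<lambda>y. \<xi> y a) x = - (\<Sum>m\<in>UNIV. christoffel g x a k m * \<xi> x m)" for k a
    using parallel[of k a] unfolding cov_vec_def by simp
  define A1 where "A1 = (\<Sum>k\<in>UNIV. \<Sum>m\<in>UNIV. \<xi> x k * christoffel g x m k i * g x m j)"
  define A2 where "A2 = (\<Sum>k\<in>UNIV. \<Sum>m\<in>UNIV. \<xi> x k * christoffel g x m k j * g x i m)"
  have "(\<Sum>k\<in>UNIV. \<xi> x k * pd k (\<lambda>y. g y i j) x) = A1 + A2"
    unfolding pd_metric_christoffel[OF x] A1_def A2_def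
    by (simp add: sum_distrib_left distrib_left sum.distrib mult.assoc)
  moreover have "(\<Sum>k\<in>UNIV. g x k j * pd i (\<lambda>y. \<xi> y k) x) = - A1"
    unfolding pd_field A1_def
    by (subst sum.swap) (simp add: sum_distrib_left sum_negf christoffel_sym[OF x, of _ i] mult_ac)
  moreover have "(\<Sum>k\<in>UNIV. g x i k * pd j (\<lambda>y. \<xi> y k) x) = - A2"
    unfolding pd_field A2_def
    by (subst sum.swap) (simp add: sum_distrib_left sum_negf christoffel_sym[OF x, of _ j] mult_ac)
  ultimately show ?thesis unfolding lie_metric_def sum.distrib by simp
qed

lemma pd_pd_field_if_parallel:
  assumes parallel: "\<And>y k a. y \<in> U \<Longrightarrow> cov_vec g \<xi> y k a = 0" and x: "x \<in> U"
  shows "pd k (pd i (\<lambda>y. \<xi> y l)) x = - (\<Sum>m\<in>UNIV. pd k (\<lambda>y. christoffel g y l i m) x * \<xi> x m)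
    + (\<Sum>m\<in>UNIV. christoffel g x l i m * (\<Sum>p\<in>UNIV. christoffel g x m k p * \<xi> x p))"
proof -
  have pd_field: "pd k (\<lambda>y. \<xi> y a) y = - (\<Sum>m\<in>UNIV. christoffel g y a k m * \<xi> y m)"
    if "y \<in> U" for y k a
    using parallel[OF that, of k a] unfolding cov_vec_def by simp
  have "has_pd k (\<lambda>y. - (\<Sum>m\<in>UNIV. christoffel g y l i m * \<xi> y m)) x
      (- (\<Sum>m\<in>UNIV. pd k (\<lambda>y. christoffel g y l i m) x * \<xi> x m
            + christoffel g x l i m * pd k (\<lambda>y. \<xi> y m) x))"
    by (intro has_pd_minus has_pd_sum has_pd_mult differentiable_imp_has_pd
        christoffel_differentiable[OF x] field_differentiable[OF x] finite)
  then have "has_pd k (pd i (\<lambda>y. \<xi> y l)) x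
      (- (\<Sum>m\<in>UNIV. pd k (\<lambda>y. christoffel g y l i m) x * \<xi> x m
            + christoffel g x l i m * pd k (\<lambda>y. \<xi> y m) x))"
    by (rule has_pd_transform_open[OF _ open_U x]) (simp add: pd_field)
  then show ?thesis
    unfolding pd_field[OF x] by (simp add: sum_subtractf) (erule has_pd_imp_pd)
qed

lemma riemann_field_eq_0_if_parallel:
  assumes parallel: "\<And>y k a. y \<in> U \<Longrightarrow> cov_vec g \<xi> y k a = 0" and x: "x \<in> U"
  shows "(\<Sum>m\<in>UNIV. riemann g x l k i m * \<xi> x m) = 0"
proof -
  define D where "D k i = (\<Sum>m\<in>UNIV. pd k (\<lambda>y. christoffel g y l i m) x * \<xi> x m)" for k i
  define Q where "Q k i = (\<Sum>m\<in>UNIV. christoffel g x l k m * (\<Sum>p\<in>UNIV. christoffel g x m i p * \<xi> x p))"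
    for k i
  have second_pd: "pd k (pd i (\<lambda>y. \<xi> y l)) x = - D k i + Q i k" for k i
    unfolding D_def Q_def by (rule pd_pd_field_if_parallel[OF parallel x])
  \<comment> \<open>the Ricci identity: the curvature term is the commutator of second partials of \<open>\<xi>\<close>\<close>
  have "pd k (pd i (\<lambda>y. \<xi> y l)) x = pd i (pd k (\<lambda>y. \<xi> y l)) x"
    by (rule pd_pd_commute[OF open_U x]) (use field_differentiable pd_field_differentiable x in auto)
  then have "D k i - D i k = Q i k - Q k i"
    unfolding second_pd by simp
  moreover have "(\<Sum>m\<in>UNIV. riemann g x l k i m * \<xi> x m) = D k i - D i k + (Q k i - Q i k)"
  proof -
    have Q_swap: "(\<Sum>m\<in>UNIV. \<Sum>p\<in>UNIV. christoffel g x l k p * christoffel g x p i m * \<xi> x m) = Q k i"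
      for k i
      unfolding Q_def by (subst sum.swap) (simp add: sum_distrib_left mult_ac)
    have "(\<Sum>m\<in>UNIV. riemann g x l k i m * \<xi> x m) = D k i - D i k
        + (\<Sum>m\<in>UNIV. (\<Sum>p\<in>UNIV. christoffel g x l k p * christoffel g x p i m
                       - christoffel g x l i p * christoffel g x p k m) * \<xi> x m)"
      unfolding riemann_def D_def by (simp add: distrib_right left_diff_distrib sum.distrib sum_subtractf)
    also have "(\<Sum>m\<in>UNIV. (\<Sum>p\<in>UNIV. christoffel g x l k p * christoffel g x p i m
                       - christoffel g x l i p * christoffel g x p k m) * \<xi> x m) = Q k i - Q i k"
      unfolding left_diff_distrib sum_distrib_right sum_subtractf Q_swap ..
    finally show ?thesis .
  qed
  ultimately show ?thesis by simp
qed

lemma ricci_field_eq_0_if_parallel: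
  assumes "\<And>y k a. y \<in> U \<Longrightarrow> cov_vec g \<xi> y k a = 0" and x: "x \<in> U"
  shows "(\<Sum>p\<in>UNIV. \<xi> x p * ricci g x p i) = 0"
proof -
  have "(\<Sum>p\<in>UNIV. \<xi> x p * ricci g x p i) = (\<Sum>k\<in>UNIV. \<Sum>p\<in>UNIV. riemann g x k k i p * \<xi> x p)"
    unfolding ricci_eq_trace_riemann[OF x] by (subst sum.swap) (simp add: sum_distrib_left mult_ac)
  then show ?thesis using riemann_field_eq_0_if_parallel[OF assms] by simp
qed

end

locale constant_length_field = chart_vector_field +
  fixes c :: real
  assumes constant_length: "\<And>y. y \<in> U \<Longrightarrow> (\<Sum>i\<in>UNIV. \<Sum>j\<in>UNIV. g y i j * \<xi> y i * \<xi> y j) = c"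
begin

lemma cov1_flat_field_eq_0:
  assumes x: "x \<in> U"
  shows "(\<Sum>a\<in>UNIV. cov1 g \<theta> x k a * \<xi> x a) = 0"
proof -
  have "(\<Sum>a\<in>UNIV. \<theta> y a * \<xi> y a) = c" if "y \<in> U" for y
    using constant_length[OF that] unfolding flat_def sum_distrib_right by (simp add: mult_ac)
  then have "pd k (\<lambda>y. \<Sum>a\<in>UNIV. \<theta> y a * \<xi> y a) x = 0"
    by (rule pd_const_on_open[OF open_U x])
  moreover have "has_pd k (\<lambda>y. \<Sum>a\<in>UNIV. \<theta> y a * \<xi> y a) x
      (\<Sum>a\<in>UNIV. pd k (\<lambda>y. \<theta> y a) x * \<xi> x a + \<theta> x a * pd k (\<lambda>y. \<xi> y a) x)"
    by (intro has_pd_sum has_pd_mult differentiable_imp_has_pd flat_differentiable[OF x]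
        field_differentiable[OF x] finite)
  ultimately have "0 = (\<Sum>a\<in>UNIV. pd k (\<lambda>y. \<theta> y a) x * \<xi> x a + \<theta> x a * pd k (\<lambda>y. \<xi> y a) x)"
    by (simp add: has_pd_imp_pd)
  also have "\<dots> = (\<Sum>a\<in>UNIV. cov1 g \<theta> x k a * \<xi> x a) + (\<Sum>a\<in>UNIV. \<theta> x a * cov_vec g \<xi> x k a)
      + ((\<Sum>a\<in>UNIV. \<Sum>l\<in>UNIV. christoffel g x l k a * \<theta> x l * \<xi> x a)
         - (\<Sum>a\<in>UNIV. \<Sum>m\<in>UNIV. \<theta> x a * christoffel g x a k m * \<xi> x m))"
    unfolding cov1_def cov_vec_def
    by (simp add: sum.distrib sum_subtractf algebra_simps sum_distrib_left sum_distrib_right)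
  also have "(\<Sum>a\<in>UNIV. \<Sum>l\<in>UNIV. christoffel g x l k a * \<theta> x l * \<xi> x a)
      = (\<Sum>a\<in>UNIV. \<Sum>m\<in>UNIV. \<theta> x a * christoffel g x a k m * \<xi> x m)"
    by (subst sum.swap) (simp add: mult_ac)
  also have "(\<Sum>a\<in>UNIV. \<theta> x a * cov_vec g \<xi> x k a) = (\<Sum>a\<in>UNIV. cov1 g \<theta> x k a * \<xi> x a)"
    unfolding cov1_flat_eq[OF x] flat_def sum_distrib_right
    by (subst sum.swap) (simp add: sum_distrib_left metric_sym[OF x] mult_ac)
  finally show ?thesis by simp
qed

lemma cov2_flat_field:
  assumes x: "x \<in> U"
  shows "(\<Sum>a\<in>UNIV. cov2 g \<theta> x i k a * \<xi> x a) + (\<Sum>a\<in>UNIV. cov1 g \<theta> x k a * cov_vec g \<xi> x i a) = 0"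
proof -
  have "pd i (\<lambda>y. \<Sum>a\<in>UNIV. cov1 g \<theta> y k a * \<xi> y a) x = 0"
    by (rule pd_const_on_open[OF open_U x cov1_flat_field_eq_0])
  moreover have "has_pd i (\<lambda>y. \<Sum>a\<in>UNIV. cov1 g \<theta> y k a * \<xi> y a) x
      (\<Sum>a\<in>UNIV. pd i (\<lambda>y. cov1 g \<theta> y k a) x * \<xi> x a + cov1 g \<theta> x k a * pd i (\<lambda>y. \<xi> y a) x)"
    by (intro has_pd_sum has_pd_mult differentiable_imp_has_pd cov1_flat_differentiable[OF x]
        field_differentiable[OF x] finite)
  ultimately have "0 = (\<Sum>a\<in>UNIV. pd i (\<lambda>y. cov1 g \<theta> y k a) x * \<xi> x a
      + cov1 g \<theta> x k a * pd i (\<lambda>y. \<xi> y a) x)"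
    by (simp add: has_pd_imp_pd)
  also have "\<dots> = (\<Sum>a\<in>UNIV. cov2 g \<theta> x i k a * \<xi> x a) + (\<Sum>a\<in>UNIV. cov1 g \<theta> x k a * cov_vec g \<xi> x i a)
      + (\<Sum>l\<in>UNIV. christoffel g x l i k * (\<Sum>a\<in>UNIV. cov1 g \<theta> x l a * \<xi> x a))
      + ((\<Sum>a\<in>UNIV. \<Sum>l\<in>UNIV. christoffel g x l i a * cov1 g \<theta> x k l * \<xi> x a)
         - (\<Sum>a\<in>UNIV. \<Sum>m\<in>UNIV. cov1 g \<theta> x k a * christoffel g x a i m * \<xi> x m))"
    unfolding cov2_def cov_vec_def
    by (simp add: sum.distrib sum_subtractf algebra_simps sum_distrib_left sum_distrib_right)
      (subst sum.swap, simp)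
  also have "(\<Sum>a\<in>UNIV. \<Sum>l\<in>UNIV. christoffel g x l i a * cov1 g \<theta> x k l * \<xi> x a)
      = (\<Sum>a\<in>UNIV. \<Sum>m\<in>UNIV. cov1 g \<theta> x k a * christoffel g x a i m * \<xi> x m)"
    by (subst sum.swap) (simp add: mult_ac)
  finally show ?thesis by (simp add: cov1_flat_field_eq_0[OF x])
qed

lemma cov1_flat_eq_0_if_harmonic:
  assumes x: "x \<in> U" and harmonic: "\<And>j. laplace g \<theta> x j = 0"
  shows "cov1 g \<theta> x k a = 0"
proof (rule pos_def_trace_eq_0_imp_zero)
  have "(\<Sum>a\<in>UNIV. cov1 g \<theta> x k a * (\<Sum>b\<in>UNIV. ginv g x a b * cov1 g \<theta> x i b))
      = - (\<Sum>a\<in>UNIV. cov2 g \<theta> x i k a * \<xi> x a)" for i k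
    using cov2_flat_field[OF x, of i k] unfolding cov_vec_eq[OF x] by simp
  then have "(\<Sum>i\<in>UNIV. \<Sum>k\<in>UNIV. ginv g x i k *
        (\<Sum>a\<in>UNIV. cov1 g \<theta> x k a * (\<Sum>b\<in>UNIV. ginv g x a b * cov1 g \<theta> x i b)))
      = - (\<Sum>i\<in>UNIV. \<Sum>k\<in>UNIV. \<Sum>a\<in>UNIV. ginv g x i k * cov2 g \<theta> x i k a * \<xi> x a)"
    by (simp add: sum_distrib_left sum_negf mult.assoc)
  also have "\<dots> = - (\<Sum>i\<in>UNIV. \<Sum>a\<in>UNIV. \<Sum>k\<in>UNIV. ginv g x i k * cov2 g \<theta> x i k a * \<xi> x a)"
    by (intro arg_cong[where f = uminus] sum.cong refl sum.swap)
  also have "\<dots> = - (\<Sum>a\<in>UNIV. laplace g \<theta> x a * \<xi> x a)"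
    unfolding laplace_def by (subst sum.swap) (simp add: sum_distrib_right)
  finally show "(\<Sum>i\<in>UNIV. \<Sum>k\<in>UNIV. ginv g x i k *
        (\<Sum>a\<in>UNIV. cov1 g \<theta> x k a * (\<Sum>b\<in>UNIV. ginv g x a b * cov1 g \<theta> x i b))) = 0"
    by (simp add: harmonic)
qed (use ginv_pos_def[OF x] ginv_sym[OF x] in auto)

lemma parallel_if_harmonic:
  "x \<in> U \<Longrightarrow> (\<And>j. laplace g \<theta> x j = 0) \<Longrightarrow> cov_vec g \<xi> x k a = 0"
  by (simp add: cov_vec_eq cov1_flat_eq_0_if_harmonic)

end

theorem theorem3p19:
  fixes U :: "(real^'n::finite) set"
    and g :: "real^'n \<Rightarrow> 'n \<Rightarrow> 'n \<Rightarrow> real"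
    and \<xi> :: "real^'n \<Rightarrow> 'n \<Rightarrow> real"
    and \<gamma> :: real
  assumes "CARD('n) \<ge> 3"
    and "U \<noteq> {}"
    and "ricci_soliton U g \<xi> \<gamma>"
    and "\<exists>c>0. \<forall>x\<in>U. (\<Sum>i\<in>UNIV. \<Sum>j\<in>UNIV. g x i j * \<xi> x i * \<xi> x j) = c"
    and "\<forall>x\<in>U. \<forall>j. laplace g (flat g \<xi>) x j = 0"
  shows "\<gamma> = 0"
proof -
  obtain c where "c > 0" and length_c: "\<forall>x\<in>U. (\<Sum>i\<in>UNIV. \<Sum>j\<in>UNIV. g x i j * \<xi> x i * \<xi> x j) = c"
    using assms(4) by blast
  interpret constant_length_field U g \<xi> c
    using assms(3) length_c unfolding ricci_soliton_def by unfold_locales auto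
  obtain x where x: "x \<in> U" using assms(2) by blast
  have parallel: "\<And>y k a. y \<in> U \<Longrightarrow> cov_vec g \<xi> y k a = 0"
    using parallel_if_harmonic assms(5) by blast
  have "1/2 * lie_metric g \<xi> x p i + ricci g x p i = \<gamma> * g x p i" for p i
    using assms(3) x unfolding ricci_soliton_def by blast
  then have ricci: "ricci g x p i = \<gamma> * g x i p" for p i
    using lie_metric_eq_0_if_parallel[OF x parallel[OF x]] metric_sym[OF x, of p i] by simp
  have "\<gamma> * c = (\<Sum>i\<in>UNIV. \<xi> x i * (\<Sum>p\<in>UNIV. \<xi> x p * ricci g x p i))"
    unfolding constant_length[OF x, symmetric] ricci by (simp add: sum_distrib_left mult_ac)
  also have "\<dots> = 0"
    using ricci_field_eq_0_if_parallel[OF parallel x] by simp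
  finally show ?thesis using \<open>c > 0\<close> by simp
qed

end
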